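(* Let $\widehat\Sigma$ be an integral $\mathbb Q$-affine polyhedral complex with support $\mathbb R^N$ admitting a strictly convex function $\widehat H\in\operatorname{Rat}(\widehat\Sigma)$, and let $\Sigma'$ be a subcomplex of $\widehat\Sigma$. Then every facewise affine function $F$ on $\widehat\Sigma$ can be written as $F=H_1-H_2$ with $H_1,H_2$ strictly convex facewise affine functions on $\widehat\Sigma$. Moreover, if the restriction of $F$ to $|\Sigma'|$ belongs to $\operatorname{Rat}(\Sigma')$, then $H_1,H_2$ can be chosen with restrictions to $|\Sigma'|$ belonging to $\operatorname{Rat}(\Sigma')$.
   Context: An integral $\mathbb Q$-affine polyhedral complex in $\mathbb R^N$ is a finite collection of polyhedra $\{u:L_i(u)\ge0\}$ with $L_i(u)=\langle m_i,u\rangle+\gamma_i$, $m_i\in\mathbb Z^N$, $\gamma_i\in\mathbb Q$, closed under faces, any two meeting in a common face. A function on $|\Sigma|$ is facewise (integral $\mathbb Q$-)affine if its restriction to each cell is the restriction of an (integral $\mathbb Q$-)affine function on $\mathbb R^N$. $\operatorname{Rat}(\Sigma)$ is the set of $\infty$ and facewise integral $\mathbb Q$-affine functions on $\Sigma$ having the same slope near infinity along any two parallel rays (unbounded one-dimensional cells with the same direction) of $\Sigma$. A facewise affine $H$ is convex if for each cell $\sigma$ there is an affine $L_\sigma$ on $\mathbb R^N$ with $H=L_\sigma$ on $\sigma$ and $H-L_\sigma\ge0$ on $\eta\setminus\sigma$ for every cell $\eta\supseteq\sigma$; strictly convex if these inequalities are strict. *)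

theory Defs
  imports "HOL-Analysis.Analysis"
begin

definition int_Q_affine :: "((real^'n) \<Rightarrow> real) \<Rightarrow> bool" where
  "int_Q_affine L \<longleftrightarrow>
     (\<exists>m::real^'n. \<exists>\<gamma>::real. (\<forall>i. m $ i \<in> \<int>) \<and> \<gamma> \<in> \<rat> \<and> L = (\<lambda>u. inner m u + \<gamma>))"

definition aff_fun :: "((real^'n) \<Rightarrow> real) \<Rightarrow> bool" where
  "aff_fun L \<longleftrightarrow> (\<exists>m::real^'n. \<exists>c::real. L = (\<lambda>u. inner m u + c))"

definition int_Q_polyhedron :: "(real^'n) set \<Rightarrow> bool" where
  "int_Q_polyhedron P \<longleftrightarrow>
     (\<exists>S. finite S \<and> (\<forall>L\<in>S. int_Q_affine L) \<and> P = {u. \<forall>L\<in>S. L u \<ge> 0})"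

definition int_Q_complex :: "(real^'n) set set \<Rightarrow> bool" where
  "int_Q_complex \<Sigma> \<longleftrightarrow>
     finite \<Sigma> \<and>
     (\<forall>\<sigma>\<in>\<Sigma>. int_Q_polyhedron \<sigma> \<and> \<sigma> \<noteq> {}) \<and>
     (\<forall>\<sigma>\<in>\<Sigma>. \<forall>F. F face_of \<sigma> \<and> F \<noteq> {} \<longrightarrow> F \<in> \<Sigma>) \<and>
     (\<forall>\<sigma>\<in>\<Sigma>. \<forall>\<tau>\<in>\<Sigma>. (\<sigma> \<inter> \<tau>) face_of \<sigma> \<and> (\<sigma> \<inter> \<tau>) face_of \<tau>)"

definition subcomplex :: "(real^'n) set set \<Rightarrow> (real^'n) set set \<Rightarrow> bool" where
  "subcomplex \<Sigma>' \<Sigma> \<longleftrightarrow> \<Sigma>' \<subseteq> \<Sigma> \<and> int_Q_complex \<Sigma>'"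

definition facewise_affine :: "(real^'n) set set \<Rightarrow> ((real^'n) \<Rightarrow> real) \<Rightarrow> bool" where
  "facewise_affine \<Sigma> F \<longleftrightarrow> (\<forall>\<sigma>\<in>\<Sigma>. \<exists>L. aff_fun L \<and> (\<forall>u\<in>\<sigma>. F u = L u))"

definition facewise_int_Q_affine :: "(real^'n) set set \<Rightarrow> ((real^'n) \<Rightarrow> real) \<Rightarrow> bool" where
  "facewise_int_Q_affine \<Sigma> F \<longleftrightarrow> (\<forall>\<sigma>\<in>\<Sigma>. \<exists>L. int_Q_affine L \<and> (\<forall>u\<in>\<sigma>. F u = L u))"

definition parallel_rays_same_slope :: "(real^'n) set set \<Rightarrow> ((real^'n) \<Rightarrow> real) \<Rightarrow> bool" where
  "parallel_rays_same_slope \<Sigma> F \<longleftrightarrow>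
     (\<forall>\<sigma>\<in>\<Sigma>. \<forall>\<tau>\<in>\<Sigma>. \<forall>p q v.
        aff_dim \<sigma> = 1 \<and> aff_dim \<tau> = 1 \<and> v \<noteq> 0 \<and>
        (\<forall>t::real. t \<ge> 0 \<longrightarrow> p + t *\<^sub>R v \<in> \<sigma>) \<and>
        (\<forall>t::real. t \<ge> 0 \<longrightarrow> q + t *\<^sub>R v \<in> \<tau>) \<longrightarrow>
        (\<forall>t::real. t \<ge> 0 \<longrightarrow> F (p + t *\<^sub>R v) - F p = F (q + t *\<^sub>R v) - F q))"

text \<open>Finite (real-valued) members of Rat(Sigma); the extra element infinity is omitted,
  since all functions in the statement are real-valued.\<close>
definition in_Rat :: "(real^'n) set set \<Rightarrow> ((real^'n) \<Rightarrow> real) \<Rightarrow> bool" where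
  "in_Rat \<Sigma> F \<longleftrightarrow> facewise_int_Q_affine \<Sigma> F \<and> parallel_rays_same_slope \<Sigma> F"

definition strictly_convex_on_complex :: "(real^'n) set set \<Rightarrow> ((real^'n) \<Rightarrow> real) \<Rightarrow> bool" where
  "strictly_convex_on_complex \<Sigma> H \<longleftrightarrow>
     facewise_affine \<Sigma> H \<and>
     (\<forall>\<sigma>\<in>\<Sigma>. \<exists>L. aff_fun L \<and> (\<forall>u\<in>\<sigma>. H u = L u) \<and>
        (\<forall>\<eta>\<in>\<Sigma>. \<sigma> \<subseteq> \<eta> \<longrightarrow> (\<forall>u\<in>\<eta> - \<sigma>. H u - L u > 0)))"

end

theory Submission
  imports Defs
begin

text \<open>Write \<open>F = (F + c Hh) - c Hh\<close> for a large natural number \<open>c\<close>; it suffices that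
  \<open>F + c Hh\<close> is strictly convex. Let \<open>\<sigma> \<subseteq> \<eta>\<close> be cells and \<open>L\<^sub>\<sigma>\<close> a strict supporting function of
  \<open>Hh\<close> at \<open>\<sigma>\<close>. On the polyhedron \<open>\<eta>\<close> the affine function \<open>h = Hh - L\<^sub>\<sigma>\<close> vanishes exactly on
  \<open>\<sigma>\<close>, so \<open>\<sigma>\<close> is cut out of \<open>\<eta>\<close> by one more affine inequality \<open>h \<le> 0\<close>. The affine function
  \<open>g = F|\<^sub>\<eta> - F|\<^sub>\<sigma>\<close> vanishes on \<open>\<sigma>\<close>, so by the affine Farkas lemma \<open>g + \<nu> h \<ge> 0\<close> on \<open>\<eta>\<close>
  for some \<open>\<nu> \<ge> 0\<close>. Any \<open>c\<close> exceeding these finitely many \<open>\<nu>\<close> works, and since \<open>c\<close> is an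
  integer, \<open>F + c Hh\<close> and \<open>c Hh\<close> lie in \<open>Rat(\<Sigma>')\<close> whenever \<open>F\<close> does.\<close>

lemma aff_fun_add:
  assumes "aff_fun f" and "aff_fun g"
  shows "aff_fun (\<lambda>u. f u + g u)"
proof -
  obtain m c m' c' where "f = (\<lambda>u. inner m u + c)" and "g = (\<lambda>u. inner m' u + c')"
    using assms unfolding aff_fun_def by blast
  then show ?thesis unfolding aff_fun_def
    by (intro exI[of _ "m + m'"] exI[of _ "c + c'"]) (auto simp: inner_add_left)
qed

lemma aff_fun_diff:
  assumes "aff_fun f" and "aff_fun g"
  shows "aff_fun (\<lambda>u. f u - g u)"
proof -
  obtain m c m' c' where "f = (\<lambda>u. inner m u + c)" and "g = (\<lambda>u. inner m' u + c')"
    using assms unfolding aff_fun_def by blast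
  then show ?thesis unfolding aff_fun_def
    by (intro exI[of _ "m - m'"] exI[of _ "c - c'"]) (auto simp: inner_diff_left)
qed

lemma aff_fun_scale:
  assumes "aff_fun f"
  shows "aff_fun (\<lambda>u. a * f u)"
proof -
  obtain m c where "f = (\<lambda>u. inner m u + c)" using assms unfolding aff_fun_def by blast
  then show ?thesis unfolding aff_fun_def
    by (intro exI[of _ "a *\<^sub>R m"] exI[of _ "a * c"]) (auto simp: algebra_simps)
qed

lemma aff_fun_const: "aff_fun (\<lambda>u. c)"
  unfolding aff_fun_def by (intro exI[of _ 0] exI[of _ c]) simp

lemma aff_fun_if_int_Q_affine: "int_Q_affine f \<Longrightarrow> aff_fun f"
  unfolding aff_fun_def int_Q_affine_def by blast

lemma int_Q_affine_add:
  assumes "int_Q_affine f" and "int_Q_affine g"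
  shows "int_Q_affine (\<lambda>u. f u + g u)"
proof -
  obtain m c m' c' where "f = (\<lambda>u. inner m u + c)" and "g = (\<lambda>u. inner m' u + c')"
    and "\<forall>i. m $ i \<in> \<int>" and "\<forall>i. m' $ i \<in> \<int>" and "c \<in> \<rat>" and "c' \<in> \<rat>"
    using assms unfolding int_Q_affine_def by blast
  then show ?thesis unfolding int_Q_affine_def
    by (intro exI[of _ "m + m'"] exI[of _ "c + c'"]) (auto simp: inner_add_left)
qed

lemma int_Q_affine_scale:
  assumes "int_Q_affine f"
  shows "int_Q_affine (\<lambda>u. real k * f u)"
proof -
  obtain m c where "f = (\<lambda>u. inner m u + c)" and "\<forall>i. m $ i \<in> \<int>" and "c \<in> \<rat>"
    using assms unfolding int_Q_affine_def by blast
  then show ?thesis unfolding int_Q_affine_def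
    by (intro exI[of _ "real k *\<^sub>R m"] exI[of _ "real k * c"]) (auto simp: algebra_simps)
qed

lemma separating_hyperplane_convex_cone:
  fixes K :: "'a::euclidean_space set"
  assumes cone: "convex_cone K" and "closed K" and "z \<notin> K"
  obtains y where "inner y z < 0" and "\<And>k. k \<in> K \<Longrightarrow> inner y k \<ge> 0"
proof -
  have "convex K" using cone by (simp add: convex_cone_def)
  then obtain y \<beta> where yz: "inner y z < \<beta>" and yK: "\<forall>k\<in>K. inner y k > \<beta>"
    using separating_hyperplane_closed_point[OF _ \<open>closed K\<close> \<open>z \<notin> K\<close>] by blast
  have \<beta>: "\<beta> < 0"
    using yK convex_cone_contains_0[OF cone] by fastforce
  have "inner y k \<ge> 0" if k: "k \<in> K" for k
  proof (rule ccontr)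
    assume "\<not> inner y k \<ge> 0"
    then have neg: "inner y k < 0" by simp
    define t where "t = \<beta> / inner y k"
    have "t \<ge> 0" using neg \<beta> unfolding t_def by (simp add: divide_nonpos_neg)
    then have "inner y (t *\<^sub>R k) > \<beta>" using yK convex_cone_scaleR[OF cone _ k] by blast
    moreover have "inner y (t *\<^sub>R k) = \<beta>" using neg unfolding t_def by simp
    ultimately show False by simp
  qed
  then show ?thesis using yz \<beta> that by force
qed

lemma affine_Farkas:
  fixes A :: "('a::euclidean_space \<times> real) set"
  assumes "finite A"
    and feasible: "\<forall>(m, c)\<in>A. inner m p + c \<ge> 0"
    and implied: "\<And>u. \<forall>(m, c)\<in>A. inner m u + c \<ge> 0 \<Longrightarrow> inner a u + b \<ge> 0"
  shows "(a, b) \<in> convex_cone hull (insert (0, 1) A)"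
proof (rule ccontr)
  let ?K = "convex_cone hull (insert (0, 1) A)"
  assume "(a, b) \<notin> ?K"
  moreover have "closed ?K" using \<open>finite A\<close> by (simp add: closed_convex_cone_hull)
  ultimately obtain y where ab: "inner y (a, b) < 0" and K: "\<And>k. k \<in> ?K \<Longrightarrow> inner y k \<ge> 0"
    using separating_hyperplane_convex_cone[OF convex_cone_convex_cone_hull] by blast
  obtain x t where y: "y = (x, t)" by (cases y)
  have generators: "insert (0, 1) A \<subseteq> ?K" by (rule hull_subset)
  have t: "t \<ge> 0" using K[of "(0, 1)"] generators y by auto
  have xA: "inner x m + t * c \<ge> 0" if "(m, c) \<in> A" for m c
    using K[of "(m, c)"] generators y that by auto
  have xab: "inner x a + t * b < 0" using ab y by simp
  show False
  proof (cases "t = 0")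
    case False
    text \<open>Then \<open>x /\<^sub>R t\<close> satisfies the system but violates the implied inequality.\<close>
    have eq: "inner m (x /\<^sub>R t) + c = (inner x m + t * c) / t" for m c
      using False by (simp add: inner_commute field_simps)
    have "\<forall>(m, c)\<in>A. inner m (x /\<^sub>R t) + c \<ge> 0"
      using xA t unfolding eq by auto
    then have "inner a (x /\<^sub>R t) + b \<ge> 0" by (rule implied)
    with xab t False show False unfolding eq by (simp add: zero_le_divide_iff)
  next
    case True
    text \<open>Then \<open>x\<close> is a recession direction of the system along which \<open>a\<close> decreases without
      bound.\<close>
    have xa: "inner x a < 0" using xab True by simp
    define s where "s = (\<bar>inner a p + b\<bar> + 1) / (- inner x a)"
    have s: "s \<ge> 0" using xa unfolding s_def by (intro divide_nonneg_pos) auto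
    have eq: "inner m (p + s *\<^sub>R x) + c = (inner m p + c) + s * inner x m" for m c
      by (simp add: inner_add_right inner_commute)
    have "\<forall>(m, c)\<in>A. inner m (p + s *\<^sub>R x) + c \<ge> 0"
      using feasible xA True s unfolding eq by auto
    then have "inner a (p + s *\<^sub>R x) + b \<ge> 0" by (rule implied)
    moreover have "s * inner x a = - (\<bar>inner a p + b\<bar> + 1)"
      using xa unfolding s_def by (simp add: field_simps)
    ultimately show False unfolding eq by simp
  qed
qed

lemma convex_cone_nonneg_up_to_multiple:
  fixes \<eta> :: "'a::real_inner set" and h :: "'a \<Rightarrow> real"
  shows "convex_cone {(a, b). \<exists>\<nu>\<ge>0. \<forall>u\<in>\<eta>. inner a u + b + \<nu> * h u \<ge> 0}"
proof -
  define Q where "Q = {(a, b). \<exists>\<nu>\<ge>0. \<forall>u\<in>\<eta>. inner a u + b + \<nu> * h u \<ge> 0}"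
  have mem_Q: "k \<in> Q \<longleftrightarrow> (\<exists>\<nu>\<ge>0. \<forall>u\<in>\<eta>. inner (fst k) u + snd k + \<nu> * h u \<ge> 0)" for k
    unfolding Q_def by (simp add: case_prod_beta)
  have "x + y \<in> Q" if "x \<in> Q" "y \<in> Q" for x y
  proof -
    obtain \<nu>1 where "\<nu>1 \<ge> 0" and x: "\<forall>u\<in>\<eta>. inner (fst x) u + snd x + \<nu>1 * h u \<ge> 0"
      using \<open>x \<in> Q\<close> unfolding mem_Q by (elim exE conjE)
    obtain \<nu>2 where "\<nu>2 \<ge> 0" and y: "\<forall>u\<in>\<eta>. inner (fst y) u + snd y + \<nu>2 * h u \<ge> 0"
      using \<open>y \<in> Q\<close> unfolding mem_Q by (elim exE conjE)
    have "inner (fst (x + y)) u + snd (x + y) + (\<nu>1 + \<nu>2) * h u \<ge> 0" if "u \<in> \<eta>" for u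
    proof -
      have eq: "inner (fst (x + y)) u + snd (x + y) + (\<nu>1 + \<nu>2) * h u
          = (inner (fst x) u + snd x + \<nu>1 * h u) + (inner (fst y) u + snd y + \<nu>2 * h u)"
        by (simp add: inner_add_left algebra_simps)
      show ?thesis using add_nonneg_nonneg[OF bspec[OF x that] bspec[OF y that]] eq by linarith
    qed
    with \<open>\<nu>1 \<ge> 0\<close> \<open>\<nu>2 \<ge> 0\<close> show ?thesis unfolding mem_Q by (intro exI[of _ "\<nu>1 + \<nu>2"]) simp
  qed
  moreover have "c *\<^sub>R x \<in> Q" if "x \<in> Q" "c \<ge> 0" for x c
  proof -
    obtain \<nu> where "\<nu> \<ge> 0" and x: "\<forall>u\<in>\<eta>. inner (fst x) u + snd x + \<nu> * h u \<ge> 0"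
      using \<open>x \<in> Q\<close> unfolding mem_Q by (elim exE conjE)
    have "inner (fst (c *\<^sub>R x)) u + snd (c *\<^sub>R x) + (c * \<nu>) * h u \<ge> 0" if "u \<in> \<eta>" for u
    proof -
      have eq: "inner (fst (c *\<^sub>R x)) u + snd (c *\<^sub>R x) + (c * \<nu>) * h u
          = c * (inner (fst x) u + snd x + \<nu> * h u)"
        by (simp add: algebra_simps)
      show ?thesis using mult_nonneg_nonneg[OF \<open>c \<ge> 0\<close> bspec[OF x that]] eq by linarith
    qed
    with \<open>\<nu> \<ge> 0\<close> \<open>c \<ge> 0\<close> show ?thesis unfolding mem_Q by (intro exI[of _ "c * \<nu>"]) simp
  qed
  moreover have "0 \<in> Q" unfolding mem_Q by (intro exI[of _ 0]) simp
  ultimately have "convex_cone Q" unfolding convex_cone_iff by blast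
  then show ?thesis unfolding Q_def .
qed

lemma affine_system_coefficients:
  assumes "finite S" and "\<forall>L\<in>S. aff_fun L"
  obtains A where "finite A" and "\<And>u. (\<forall>(m, c)\<in>A. inner m u + c \<ge> 0) \<longleftrightarrow> (\<forall>L\<in>S. L u \<ge> 0)"
proof -
  have "\<forall>L\<in>S. \<exists>mc. L = (\<lambda>u. inner (fst mc) u + snd mc)"
    using assms(2) unfolding aff_fun_def by force
  from bchoice[OF this] obtain r where r: "\<forall>L\<in>S. L = (\<lambda>u. inner (fst (r L)) u + snd (r L))"
    by (elim exE)
  have "inner (fst (r L)) u + snd (r L) = L u" if "L \<in> S" for L u
    using fun_cong[OF r[rule_format, OF that]] by simp
  then have "(\<forall>(m, c)\<in>r ` S. inner m u + c \<ge> 0) \<longleftrightarrow> (\<forall>L\<in>S. L u \<ge> 0)" for u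
    by (simp add: case_prod_beta)
  with \<open>finite S\<close> show ?thesis by (intro that[of "r ` S"]) simp_all
qed

lemma affine_nonneg_up_to_multiple:
  fixes g h :: "real^'n \<Rightarrow> real"
  assumes "finite S" and "\<forall>L\<in>S. aff_fun L" and \<eta>: "\<eta> = {u. \<forall>L\<in>S. L u \<ge> 0}"
    and "\<sigma> \<subseteq> \<eta>" and "\<sigma> \<noteq> {}" and "aff_fun g" and "aff_fun h"
    and g_nonneg: "\<forall>u\<in>\<sigma>. g u \<ge> 0" and h_zero: "\<forall>u\<in>\<sigma>. h u = 0"
    and h_pos: "\<forall>u\<in>\<eta> - \<sigma>. h u > 0"
  shows "\<exists>\<nu>\<ge>0. \<forall>u\<in>\<eta>. g u + \<nu> * h u \<ge> 0"
proof -
  obtain A\<eta> where "finite A\<eta>"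
    and "\<And>u. (\<forall>(m, c)\<in>A\<eta>. inner m u + c \<ge> 0) \<longleftrightarrow> (\<forall>L\<in>S. L u \<ge> 0)"
    using affine_system_coefficients[OF assms(1,2)] by blast
  then have A\<eta>: "(\<forall>(m, c)\<in>A\<eta>. inner m u + c \<ge> 0) \<longleftrightarrow> u \<in> \<eta>" for u
    unfolding \<eta> by simp
  obtain a b where g: "g = (\<lambda>u. inner a u + b)" using \<open>aff_fun g\<close> unfolding aff_fun_def by blast
  obtain a' b' where h: "h = (\<lambda>u. inner a' u + b')" using \<open>aff_fun h\<close> unfolding aff_fun_def by blast
  text \<open>Inside \<open>\<eta>\<close>, the face \<open>\<sigma>\<close> is cut out by the single extra inequality \<open>h \<le> 0\<close>.\<close>
  define A where "A = insert (- a', - b') A\<eta>"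
  have \<sigma>: "(\<forall>(m, c)\<in>A. inner m u + c \<ge> 0) \<longleftrightarrow> u \<in> \<sigma>" for u
  proof -
    have "(\<forall>(m, c)\<in>A. inner m u + c \<ge> 0) \<longleftrightarrow> u \<in> \<eta> \<and> h u \<le> 0"
      unfolding A_def A\<eta>[symmetric] by (auto simp: h)
    also have "\<dots> \<longleftrightarrow> u \<in> \<sigma>"
    proof
      assume "u \<in> \<eta> \<and> h u \<le> 0"
      then show "u \<in> \<sigma>" using h_pos by force
    next
      assume "u \<in> \<sigma>"
      then show "u \<in> \<eta> \<and> h u \<le> 0" using \<open>\<sigma> \<subseteq> \<eta>\<close> h_zero by auto
    qed
    finally show ?thesis .
  qed
  define Q where "Q = {(a, b). \<exists>\<nu>\<ge>0. \<forall>u\<in>\<eta>. inner a u + b + \<nu> * h u \<ge> 0}"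
  have "insert (0, 1) A \<subseteq> Q"
  proof -
    have "(- a', - b') \<in> Q" unfolding Q_def by (auto simp: h intro!: exI[of _ 1])
    moreover have "k \<in> Q" if "k \<in> A\<eta>" for k
    proof -
      have "inner (fst k) u + snd k \<ge> 0" if "u \<in> \<eta>" for u
        using bspec[OF A\<eta>[THEN iffD2, OF that] \<open>k \<in> A\<eta>\<close>] by (simp add: case_prod_beta)
      then show ?thesis unfolding Q_def by (auto simp: case_prod_beta intro!: exI[of _ 0])
    qed
    moreover have "(0, 1) \<in> Q" unfolding Q_def by (auto intro!: exI[of _ 0])
    ultimately show ?thesis unfolding A_def by blast
  qed
  then have cone: "convex_cone hull (insert (0, 1) A) \<subseteq> Q"
    unfolding Q_def by (intro hull_minimal convex_cone_nonneg_up_to_multiple)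
  obtain p where "p \<in> \<sigma>" using \<open>\<sigma> \<noteq> {}\<close> by blast
  have "finite A" unfolding A_def using \<open>finite A\<eta>\<close> by simp
  have "(a, b) \<in> convex_cone hull (insert (0, 1) A)"
  proof (rule affine_Farkas[where p = p, OF \<open>finite A\<close>])
    show "\<forall>(m, c)\<in>A. inner m p + c \<ge> 0" by (rule \<sigma>[THEN iffD2, OF \<open>p \<in> \<sigma>\<close>])
    show "inner a u + b \<ge> 0" if "\<forall>(m, c)\<in>A. inner m u + c \<ge> 0" for u
      using g_nonneg \<sigma>[THEN iffD1, OF that] unfolding g by simp
  qed
  with cone have "(a, b) \<in> Q" by (rule subsetD)
  then show ?thesis unfolding Q_def g by simp
qed

lemma strictly_convex_on_complexI:
  assumes "\<And>\<sigma>. \<sigma> \<in> \<Sigma> \<Longrightarrow> \<exists>L. aff_fun L \<and> (\<forall>u\<in>\<sigma>. H u = L u) \<and>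
      (\<forall>\<eta>\<in>\<Sigma>. \<sigma> \<subseteq> \<eta> \<longrightarrow> (\<forall>u\<in>\<eta> - \<sigma>. H u - L u > 0))"
  shows "strictly_convex_on_complex \<Sigma> H"
  unfolding strictly_convex_on_complex_def facewise_affine_def
proof (intro conjI ballI)
  fix \<sigma> assume "\<sigma> \<in> \<Sigma>"
  from assms[OF this] show "\<exists>L. aff_fun L \<and> (\<forall>u\<in>\<sigma>. H u = L u)" by (elim exE conjE) blast
  from assms[OF \<open>\<sigma> \<in> \<Sigma>\<close>] show "\<exists>L. aff_fun L \<and> (\<forall>u\<in>\<sigma>. H u = L u) \<and>
      (\<forall>\<eta>\<in>\<Sigma>. \<sigma> \<subseteq> \<eta> \<longrightarrow> (\<forall>u\<in>\<eta> - \<sigma>. H u - L u > 0))" .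
qed

lemma affine_on_cell_dominated_by_multiple:
  fixes F H :: "real^'n \<Rightarrow> real"
  assumes "int_Q_polyhedron \<eta>" and "\<sigma> \<noteq> {}" and "\<sigma> \<subseteq> \<eta>"
    and "aff_fun F\<eta>" and F\<eta>: "\<forall>u\<in>\<eta>. F u = F\<eta> u" and "aff_fun F\<sigma>" and F\<sigma>: "\<forall>u\<in>\<sigma>. F u = F\<sigma> u"
    and "aff_fun H\<eta>" and H\<eta>: "\<forall>u\<in>\<eta>. H u = H\<eta> u" and "aff_fun H\<sigma>" and H\<sigma>: "\<forall>u\<in>\<sigma>. H u = H\<sigma> u"
    and strict: "\<forall>u\<in>\<eta> - \<sigma>. H u - H\<sigma> u > 0"
  shows "\<exists>\<nu>\<ge>0. \<forall>u\<in>\<eta>. F u - F\<sigma> u + \<nu> * (H u - H\<sigma> u) \<ge> 0"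
proof -
  obtain S where "finite S" and S: "\<forall>L\<in>S. int_Q_affine L" and \<eta>: "\<eta> = {u. \<forall>L\<in>S. L u \<ge> 0}"
    using \<open>int_Q_polyhedron \<eta>\<close> unfolding int_Q_polyhedron_def by (elim exE conjE)
  have on_\<sigma>: "F\<eta> u = F\<sigma> u \<and> H\<eta> u = H\<sigma> u" if "u \<in> \<sigma>" for u
    using F\<eta> F\<sigma> H\<eta> H\<sigma> that \<open>\<sigma> \<subseteq> \<eta>\<close> by (metis subsetD)
  have "\<exists>\<nu>\<ge>0. \<forall>u\<in>\<eta>. (F\<eta> u - F\<sigma> u) + \<nu> * (H\<eta> u - H\<sigma> u) \<ge> 0"
  proof (rule affine_nonneg_up_to_multiple[OF \<open>finite S\<close> _ \<eta> \<open>\<sigma> \<subseteq> \<eta>\<close> \<open>\<sigma> \<noteq> {}\<close>])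
    show "\<forall>L\<in>S. aff_fun L" using S aff_fun_if_int_Q_affine by blast
    show "aff_fun (\<lambda>u. F\<eta> u - F\<sigma> u)" "aff_fun (\<lambda>u. H\<eta> u - H\<sigma> u)"
      using assms by (simp_all add: aff_fun_diff)
    show "\<forall>u\<in>\<sigma>. F\<eta> u - F\<sigma> u \<ge> 0" "\<forall>u\<in>\<sigma>. H\<eta> u - H\<sigma> u = 0"
      using on_\<sigma> by simp_all
    show "\<forall>u\<in>\<eta> - \<sigma>. H\<eta> u - H\<sigma> u > 0"
      using strict H\<eta> by auto
  qed
  then show ?thesis using F\<eta> H\<eta> by auto
qed

lemma strictly_convex_on_complex_add_multiple:
  fixes \<Sigma> :: "(real^'n) set set"
  assumes "finite \<Sigma>" and cells: "\<forall>\<sigma>\<in>\<Sigma>. int_Q_polyhedron \<sigma> \<and> \<sigma> \<noteq> {}"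
    and H: "strictly_convex_on_complex \<Sigma> H" and F: "facewise_affine \<Sigma> F"
  shows "\<exists>c0. \<forall>c>c0. strictly_convex_on_complex \<Sigma> (\<lambda>u. F u + c * H u)"
proof -
  have "\<forall>\<sigma>\<in>\<Sigma>. \<exists>L. aff_fun L \<and> (\<forall>u\<in>\<sigma>. F u = L u)"
    using F unfolding facewise_affine_def .
  from bchoice[OF this] obtain FL where FL: "\<forall>\<sigma>\<in>\<Sigma>. aff_fun (FL \<sigma>) \<and> (\<forall>u\<in>\<sigma>. F u = FL \<sigma> u)"
    by (elim exE)
  have "\<forall>\<sigma>\<in>\<Sigma>. \<exists>L. aff_fun L \<and> (\<forall>u\<in>\<sigma>. H u = L u) \<and>
      (\<forall>\<eta>\<in>\<Sigma>. \<sigma> \<subseteq> \<eta> \<longrightarrow> (\<forall>u\<in>\<eta> - \<sigma>. H u - L u > 0))"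
    using H unfolding strictly_convex_on_complex_def by (rule conjunct2)
  from bchoice[OF this] obtain HL where HL: "\<forall>\<sigma>\<in>\<Sigma>. aff_fun (HL \<sigma>) \<and> (\<forall>u\<in>\<sigma>. H u = HL \<sigma> u) \<and>
      (\<forall>\<eta>\<in>\<Sigma>. \<sigma> \<subseteq> \<eta> \<longrightarrow> (\<forall>u\<in>\<eta> - \<sigma>. H u - HL \<sigma> u > 0))"
    by (elim exE)
  define margin where "margin \<sigma> \<eta> \<nu> \<longleftrightarrow>
      \<nu> \<ge> 0 \<and> (\<forall>u\<in>\<eta>. F u - FL \<sigma> u + \<nu> * (H u - HL \<sigma> u) \<ge> 0)" for \<sigma> \<eta> \<nu>
  have "\<exists>\<nu>. margin \<sigma> \<eta> \<nu>" if "\<sigma> \<in> \<Sigma>" "\<eta> \<in> \<Sigma>" "\<sigma> \<subseteq> \<eta>" for \<sigma> \<eta>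
  proof -
    have FL\<sigma>: "aff_fun (FL \<sigma>) \<and> (\<forall>u\<in>\<sigma>. F u = FL \<sigma> u)" using FL \<open>\<sigma> \<in> \<Sigma>\<close> ..
    have FL\<eta>: "aff_fun (FL \<eta>) \<and> (\<forall>u\<in>\<eta>. F u = FL \<eta> u)" using FL \<open>\<eta> \<in> \<Sigma>\<close> ..
    have HL\<sigma>: "aff_fun (HL \<sigma>) \<and> (\<forall>u\<in>\<sigma>. H u = HL \<sigma> u) \<and>
        (\<forall>\<eta>\<in>\<Sigma>. \<sigma> \<subseteq> \<eta> \<longrightarrow> (\<forall>u\<in>\<eta> - \<sigma>. H u - HL \<sigma> u > 0))"
      using HL \<open>\<sigma> \<in> \<Sigma>\<close> ..
    have HL\<eta>: "aff_fun (HL \<eta>) \<and> (\<forall>u\<in>\<eta>. H u = HL \<eta> u)" using HL \<open>\<eta> \<in> \<Sigma>\<close> by blast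
    have "int_Q_polyhedron \<eta>" and "\<sigma> \<noteq> {}" using cells that by blast+
    with \<open>\<sigma> \<subseteq> \<eta>\<close> have "\<exists>\<nu>\<ge>0. \<forall>u\<in>\<eta>. F u - FL \<sigma> u + \<nu> * (H u - HL \<sigma> u) \<ge> 0"
      by (intro affine_on_cell_dominated_by_multiple[where F\<eta> = "FL \<eta>" and H\<eta> = "HL \<eta>"])
        (use FL\<sigma> FL\<eta> HL\<sigma> HL\<eta> that in auto)
    then show ?thesis unfolding margin_def .
  qed
  then obtain \<nu> where \<nu>: "\<And>\<sigma> \<eta>. \<sigma> \<in> \<Sigma> \<Longrightarrow> \<eta> \<in> \<Sigma> \<Longrightarrow> \<sigma> \<subseteq> \<eta> \<Longrightarrow> margin \<sigma> \<eta> (\<nu> \<sigma> \<eta>)"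
    by (metis someI_ex)
  define c0 where "c0 = Max ((\<lambda>(\<sigma>, \<eta>). \<nu> \<sigma> \<eta>) ` (\<Sigma> \<times> \<Sigma>))"
  have \<nu>_le: "\<nu> \<sigma> \<eta> \<le> c0" if "\<sigma> \<in> \<Sigma>" "\<eta> \<in> \<Sigma>" for \<sigma> \<eta>
    unfolding c0_def using \<open>finite \<Sigma>\<close> that by (intro Max_ge) force+
  have "strictly_convex_on_complex \<Sigma> (\<lambda>u. F u + c * H u)" if "c > c0" for c
  proof (rule strictly_convex_on_complexI)
    fix \<sigma> assume "\<sigma> \<in> \<Sigma>"
    show "\<exists>L. aff_fun L \<and> (\<forall>u\<in>\<sigma>. F u + c * H u = L u) \<and>
        (\<forall>\<eta>\<in>\<Sigma>. \<sigma> \<subseteq> \<eta> \<longrightarrow> (\<forall>u\<in>\<eta> - \<sigma>. F u + c * H u - L u > 0))"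
    proof (intro exI[of _ "\<lambda>u. FL \<sigma> u + c * HL \<sigma> u"] conjI ballI impI)
      show "aff_fun (\<lambda>u. FL \<sigma> u + c * HL \<sigma> u)"
        using FL HL \<open>\<sigma> \<in> \<Sigma>\<close> by (intro aff_fun_add aff_fun_scale) auto
      show "F u + c * H u = FL \<sigma> u + c * HL \<sigma> u" if "u \<in> \<sigma>" for u
        using FL HL \<open>\<sigma> \<in> \<Sigma>\<close> that by simp
      fix \<eta> u assume "\<eta> \<in> \<Sigma>" "\<sigma> \<subseteq> \<eta>" "u \<in> \<eta> - \<sigma>"
      have "H u - HL \<sigma> u > 0" using HL \<open>\<sigma> \<in> \<Sigma>\<close> \<open>\<eta> \<in> \<Sigma>\<close> \<open>\<sigma> \<subseteq> \<eta>\<close> \<open>u \<in> \<eta> - \<sigma>\<close> by blast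
      moreover have "F u - FL \<sigma> u + \<nu> \<sigma> \<eta> * (H u - HL \<sigma> u) \<ge> 0"
        using \<nu>[OF \<open>\<sigma> \<in> \<Sigma>\<close> \<open>\<eta> \<in> \<Sigma>\<close> \<open>\<sigma> \<subseteq> \<eta>\<close>] \<open>u \<in> \<eta> - \<sigma>\<close> unfolding margin_def by blast
      moreover have "\<nu> \<sigma> \<eta> < c" using \<nu>_le[OF \<open>\<sigma> \<in> \<Sigma>\<close> \<open>\<eta> \<in> \<Sigma>\<close>] \<open>c > c0\<close> by simp
      ultimately have "F u - FL \<sigma> u + \<nu> \<sigma> \<eta> * (H u - HL \<sigma> u) + (c - \<nu> \<sigma> \<eta>) * (H u - HL \<sigma> u) > 0"
        by (simp add: add_nonneg_pos)
      then show "F u + c * H u - (FL \<sigma> u + c * HL \<sigma> u) > 0"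
        by (simp add: algebra_simps)
    qed
  qed
  then show ?thesis by blast
qed

lemma in_Rat_mono:
  assumes "\<Sigma>' \<subseteq> \<Sigma>" and "in_Rat \<Sigma> H"
  shows "in_Rat \<Sigma>' H"
proof -
  have "facewise_int_Q_affine \<Sigma> H" and "parallel_rays_same_slope \<Sigma> H"
    using \<open>in_Rat \<Sigma> H\<close> unfolding in_Rat_def by auto
  then have "facewise_int_Q_affine \<Sigma>' H" and "parallel_rays_same_slope \<Sigma>' H"
    using \<open>\<Sigma>' \<subseteq> \<Sigma>\<close> unfolding facewise_int_Q_affine_def parallel_rays_same_slope_def
    by (meson subsetD)+
  then show ?thesis unfolding in_Rat_def ..
qed

lemma in_Rat_add:
  assumes "in_Rat \<Sigma> F" and "in_Rat \<Sigma> G"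
  shows "in_Rat \<Sigma> (\<lambda>u. F u + G u)"
proof -
  have F: "facewise_int_Q_affine \<Sigma> F" "parallel_rays_same_slope \<Sigma> F"
    and G: "facewise_int_Q_affine \<Sigma> G" "parallel_rays_same_slope \<Sigma> G"
    using assms unfolding in_Rat_def by auto
  have "facewise_int_Q_affine \<Sigma> (\<lambda>u. F u + G u)"
    unfolding facewise_int_Q_affine_def
  proof
    fix \<sigma> assume "\<sigma> \<in> \<Sigma>"
    obtain L1 where "int_Q_affine L1" "\<forall>u\<in>\<sigma>. F u = L1 u"
      using F(1) \<open>\<sigma> \<in> \<Sigma>\<close> unfolding facewise_int_Q_affine_def by blast
    moreover obtain L2 where "int_Q_affine L2" "\<forall>u\<in>\<sigma>. G u = L2 u"
      using G(1) \<open>\<sigma> \<in> \<Sigma>\<close> unfolding facewise_int_Q_affine_def by blast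
    ultimately show "\<exists>L. int_Q_affine L \<and> (\<forall>u\<in>\<sigma>. F u + G u = L u)"
      by (intro exI[of _ "\<lambda>u. L1 u + L2 u"]) (simp add: int_Q_affine_add)
  qed
  moreover have "parallel_rays_same_slope \<Sigma> (\<lambda>u. F u + G u)"
    unfolding parallel_rays_same_slope_def
  proof (intro ballI allI impI)
    fix \<sigma> \<tau> p q v and t :: real
    assume ray: "\<sigma> \<in> \<Sigma>" "\<tau> \<in> \<Sigma>"
      "aff_dim \<sigma> = 1 \<and> aff_dim \<tau> = 1 \<and> v \<noteq> 0 \<and>
       (\<forall>t\<ge>0. p + t *\<^sub>R v \<in> \<sigma>) \<and> (\<forall>t\<ge>0. q + t *\<^sub>R v \<in> \<tau>)" "t \<ge> 0"
    note F(2)[unfolded parallel_rays_same_slope_def, rule_format, OF ray]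
      and G(2)[unfolded parallel_rays_same_slope_def, rule_format, OF ray]
    then show "F (p + t *\<^sub>R v) + G (p + t *\<^sub>R v) - (F p + G p) =
        F (q + t *\<^sub>R v) + G (q + t *\<^sub>R v) - (F q + G q)"
      by linarith
  qed
  ultimately show ?thesis unfolding in_Rat_def ..
qed

lemma in_Rat_scale:
  assumes "in_Rat \<Sigma> H"
  shows "in_Rat \<Sigma> (\<lambda>u. real k * H u)"
proof -
  have H: "facewise_int_Q_affine \<Sigma> H" "parallel_rays_same_slope \<Sigma> H"
    using assms unfolding in_Rat_def by auto
  have "facewise_int_Q_affine \<Sigma> (\<lambda>u. real k * H u)"
    using H(1) int_Q_affine_scale unfolding facewise_int_Q_affine_def by fastforce
  moreover have "parallel_rays_same_slope \<Sigma> (\<lambda>u. real k * H u)"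
    using H(2) unfolding parallel_rays_same_slope_def
    by (simp flip: right_diff_distrib)
  ultimately show ?thesis unfolding in_Rat_def ..
qed

theorem proposition5p3:
  fixes \<Sigma>h \<Sigma>' :: "(real^'n) set set"
    and Hh F :: "(real^'n) \<Rightarrow> real"
  assumes "int_Q_complex \<Sigma>h"
    and "\<Union>\<Sigma>h = UNIV"
    and "in_Rat \<Sigma>h Hh"
    and "strictly_convex_on_complex \<Sigma>h Hh"
    and "subcomplex \<Sigma>' \<Sigma>h"
    and "facewise_affine \<Sigma>h F"
  shows "\<exists>H1 H2. strictly_convex_on_complex \<Sigma>h H1 \<and> strictly_convex_on_complex \<Sigma>h H2 \<and>
           (\<forall>u. F u = H1 u - H2 u) \<and>
           (in_Rat \<Sigma>' F \<longrightarrow> in_Rat \<Sigma>' H1 \<and> in_Rat \<Sigma>' H2)"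
proof -
  have "finite \<Sigma>h" and cells: "\<forall>\<sigma>\<in>\<Sigma>h. int_Q_polyhedron \<sigma> \<and> \<sigma> \<noteq> {}"
    using assms(1) unfolding int_Q_complex_def by blast+
  obtain c0 where c0: "\<And>c. c > c0 \<Longrightarrow> strictly_convex_on_complex \<Sigma>h (\<lambda>u. F u + c * Hh u)"
    using strictly_convex_on_complex_add_multiple[OF \<open>finite \<Sigma>h\<close> cells assms(4,6)] by blast
  have "facewise_affine \<Sigma>h (\<lambda>u. 0)"
    unfolding facewise_affine_def using aff_fun_const by blast
  then obtain c1 where c1: "\<And>c. c > c1 \<Longrightarrow> strictly_convex_on_complex \<Sigma>h (\<lambda>u. 0 + c * Hh u)"
    using strictly_convex_on_complex_add_multiple[OF \<open>finite \<Sigma>h\<close> cells assms(4)] by blast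
  define k :: nat where "k = nat \<lceil>max c0 c1\<rceil> + 1"
  have "real k > c0" and "real k > c1" unfolding k_def by linarith+
  moreover have "in_Rat \<Sigma>' (\<lambda>u. F u + real k * Hh u) \<and> in_Rat \<Sigma>' (\<lambda>u. real k * Hh u)"
    if "in_Rat \<Sigma>' F"
  proof -
    have "in_Rat \<Sigma>' Hh" using assms(3,5) in_Rat_mono unfolding subcomplex_def by blast
    then show ?thesis using that by (simp add: in_Rat_add in_Rat_scale)
  qed
  ultimately show ?thesis
    using c0 c1 by (intro exI[of _ "\<lambda>u. F u + real k * Hh u"] exI[of _ "\<lambda>u. real k * Hh u"]) simp
qed

end
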